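(* Let $\mathcal C_1$ and $\mathcal C_2$ be $C^2$ convex curves with the same endpoints and with $\mathcal C_1$ contained in the convex hull of $\mathcal C_2$. Assume the total curvature of $\mathcal C_2$ satisfies $\int_{\mathcal C_2}\kappa\,ds\le\pi$. Then $$\max_{P\in\mathcal C_2}\kappa_{\mathcal C_2}(P)\ge\min_{Q\in\mathcal C_1}\kappa_{\mathcal C_1}(Q).$$
   Context: Curves are of class $C^2$ with nonvanishing first and second derivative vectors, oriented so that the curvature is positive; $\kappa_{\mathcal C}$ denotes the curvature of $\mathcal C$, $s$ arclength, and $\int_{\mathcal C}\kappa\,ds$ the total curvature (total change of the tangent angle). *)

theory Defs
  imports "HOL-Analysis.Analysis"
begin

definition vel :: "(real \<Rightarrow> real^2) \<Rightarrow> real \<Rightarrow> real^2" where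
  "vel \<gamma> t = vector_derivative \<gamma> (at t within {0..1})"

definition acc :: "(real \<Rightarrow> real^2) \<Rightarrow> real \<Rightarrow> real^2" where
  "acc \<gamma> t = vector_derivative (vel \<gamma>) (at t within {0..1})"

definition regular_C2_curve :: "(real \<Rightarrow> real^2) \<Rightarrow> bool" where
  "regular_C2_curve \<gamma> \<longleftrightarrow>
     (\<forall>t\<in>{0..1}. (\<gamma> has_vector_derivative vel \<gamma> t) (at t within {0..1}) \<and>
                 (vel \<gamma> has_vector_derivative acc \<gamma> t) (at t within {0..1}) \<and>
                 vel \<gamma> t \<noteq> 0 \<and> acc \<gamma> t \<noteq> 0) \<and>
     continuous_on {0..1} (acc \<gamma>)"

definition curvature :: "(real \<Rightarrow> real^2) \<Rightarrow> real \<Rightarrow> real" where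
  "curvature \<gamma> t =
     (vel \<gamma> t $ 1 * acc \<gamma> t $ 2 - vel \<gamma> t $ 2 * acc \<gamma> t $ 1) / norm (vel \<gamma> t) ^ 3"

definition total_curvature :: "(real \<Rightarrow> real^2) \<Rightarrow> real" where
  "total_curvature \<gamma> = integral {0..1} (\<lambda>t. curvature \<gamma> t * norm (vel \<gamma> t))"

text \<open>A convex curve (arc): a simple arc lying on the boundary of its convex hull,
  here additionally C^2, regular, with positive curvature (standing orientation convention).\<close>
definition convex_curve :: "(real \<Rightarrow> real^2) \<Rightarrow> bool" where
  "convex_curve \<gamma> \<longleftrightarrow> regular_C2_curve \<gamma> \<and> arc \<gamma> \<and>
     path_image \<gamma> \<subseteq> frontier (convex hull (path_image \<gamma>)) \<and>
     (\<forall>t\<in>{0..1}. curvature \<gamma> t > 0)"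

end

theory Submission
  imports Defs
begin

text \<open>
  Let \<open>A\<close>, \<open>B\<close> be the common endpoints and let the tangent angle of \<open>C2\<close> increase from
  \<open>a0\<close> to \<open>a1 \<le> a0 + pi\<close>. Since \<open>ds = d\<theta> / \<kappa>\<close>, the projection of \<open>B - A\<close> onto the
  bisecting direction \<open>\<beta> = (a0 + a1) / 2\<close> is the integral of \<open>cos (\<theta> - \<beta>) d\<theta> / \<kappa>\<close> along
  either curve; along \<open>C2\<close> it is therefore at least \<open>2 sin ((a1 - a0) / 2) / max \<kappa>2\<close>.
  On the other hand \<open>C1\<close> lies in the triangle bounded by the chord \<open>AB\<close> and the tangents of
  \<open>C2\<close> at \<open>A\<close> and \<open>B\<close>. A convex arc inside that triangle must run from \<open>A\<close> to \<open>B\<close>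
  with all its tangent angles in \<open>[a0, a1]\<close> modulo \<open>2 pi\<close>, so along \<open>C1\<close> the same
  projection is at most \<open>2 sin ((a1 - a0) / 2) / min \<kappa>1\<close>.
\<close>

section \<open>Calculus on an interval\<close>

lemma has_real_derivative_nonneg_imp_le:
  fixes f :: "real \<Rightarrow> real"
  assumes "a \<le> b" "{a..b} \<subseteq> S"
    and "\<And>x. x \<in> {a..b} \<Longrightarrow> (f has_real_derivative f' x) (at x within S)"
    and "\<And>x. x \<in> {a..b} \<Longrightarrow> 0 \<le> f' x"
  shows "f a \<le> f b"
proof -
  have "(f' has_integral (f b - f a)) {a..b}"
    by (rule fundamental_theorem_of_calculus[OF assms(1)])
      (use assms(2,3) in \<open>auto simp flip: has_real_derivative_iff_has_vector_derivative
        intro: DERIV_subset\<close>)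
  then have "0 \<le> f b - f a"
    by (rule has_integral_nonneg) (use assms(4) in auto)
  then show ?thesis by simp
qed

lemma has_real_derivative_pos_imp_less:
  fixes f :: "real \<Rightarrow> real"
  assumes "a < b" "{a..b} \<subseteq> S"
    and "\<And>x. x \<in> {a..b} \<Longrightarrow> (f has_real_derivative f' x) (at x within S)"
    and "\<And>x. x \<in> {a<..<b} \<Longrightarrow> 0 < f' x"
  shows "f a < f b"
proof -
  have "\<exists>x\<in>{a<..<b}. f b - f a = f' x * (b - a)"
  proof (rule mvt_simple[OF assms(1)])
    fix x assume "a \<le> x" "x \<le> b"
    then have "(f has_real_derivative f' x) (at x within {a..b})"
      using assms(2,3) by (auto intro: DERIV_subset)
    then show "(f has_derivative (*) (f' x)) (at x within {a..b})"
      by (simp add: has_field_derivative_def)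
  qed
  then obtain x where "x \<in> {a<..<b}" "f b - f a = f' x * (b - a)" by blast
  moreover have "0 < f' x * (b - a)" using \<open>x \<in> {a<..<b}\<close> assms(1,4) by simp
  ultimately show ?thesis by simp
qed

lemma has_vector_derivative_nth:
  assumes "(f has_vector_derivative f') (at t within S)"
  shows "((\<lambda>u. f u $ i) has_real_derivative f' $ i) (at t within S)"
  using bounded_linear.has_vector_derivative[OF bounded_linear_vec_nth assms]
  by (simp add: has_real_derivative_iff_has_vector_derivative)

lemma min_right_deriv_nonneg:
  fixes f :: "real \<Rightarrow> real"
  assumes "(f has_real_derivative l) (at t within {a..b})" "a \<le> t" "t < b"
    and "\<And>u. u \<in> {a..b} \<Longrightarrow> f t \<le> f u"
  shows "0 \<le> l"
proof (rule ccontr)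
  assume "\<not> 0 \<le> l"
  then obtain d where "d > 0" and d: "\<And>h. h > 0 \<Longrightarrow> t + h \<in> {a..b} \<Longrightarrow> h < d \<Longrightarrow> f (t + h) < f t"
    using has_real_derivative_neg_dec_right[OF assms(1)] by force
  define h where "h = min (d / 2) (b - t)"
  have "h > 0" "h < d" "t + h \<in> {a..b}"
    using \<open>d > 0\<close> assms(2,3) by (auto simp: h_def)
  with d assms(4) show False by force
qed

lemma min_left_deriv_nonpos:
  fixes f :: "real \<Rightarrow> real"
  assumes "(f has_real_derivative l) (at t within {a..b})" "a < t" "t \<le> b"
    and "\<And>u. u \<in> {a..b} \<Longrightarrow> f t \<le> f u"
  shows "l \<le> 0"
proof (rule ccontr)
  assume "\<not> l \<le> 0"
  then obtain d where "d > 0" and d: "\<And>h. h > 0 \<Longrightarrow> t - h \<in> {a..b} \<Longrightarrow> h < d \<Longrightarrow> f (t - h) < f t"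
    using has_real_derivative_pos_inc_left[OF assms(1)] by force
  define h where "h = min (d / 2) (t - a)"
  have "h > 0" "h < d" "t - h \<in> {a..b}"
    using \<open>d > 0\<close> assms(2,3) by (auto simp: h_def)
  with d assms(4) show False by force
qed

section \<open>Plane geometry\<close>

lemma sin_add_2pi_int [simp]: "sin (x + 2 * pi * of_int n) = sin x"
  by (simp add: sin_add)

lemma cos_add_2pi_int [simp]: "cos (x + 2 * pi * of_int n) = cos x"
  by (simp add: cos_add)

lemma angle_mod_2pi_in_interval:
  assumes "0 < b - a" "b - a \<le> pi" "0 \<le> sin (x - a)" "sin (x - b) \<le> 0"
  obtains n :: int where "a \<le> x + 2 * pi * n" "x + 2 * pi * n \<le> b"
proof -
  define z where "z = (x - a) / (2 * pi)"
  define n where "n = - \<lfloor>z\<rfloor>"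
  define y where "y = x + 2 * pi * n - a"
  have "x - a = 2 * pi * z" by (simp add: z_def)
  then have "y = 2 * pi * (z - \<lfloor>z\<rfloor>)" by (simp add: y_def n_def algebra_simps)
  moreover have "0 \<le> z - \<lfloor>z\<rfloor>" "z - \<lfloor>z\<rfloor> < 1" by linarith+
  ultimately have "0 \<le> y" "y < 2 * pi" by simp_all
  have "y \<le> pi"
  proof (rule ccontr)
    assume "\<not> y \<le> pi"
    with \<open>y < 2 * pi\<close> have "0 < sin (y - pi)" by (intro sin_gt_zero) auto
    moreover have "sin y = sin (x - a)"
      using sin_add_2pi_int[of "x - a" n] by (simp add: y_def algebra_simps)
    ultimately show False using assms(3) by (simp add: sin_diff)
  qed
  have "y \<le> b - a"
  proof (rule ccontr)
    assume "\<not> y \<le> b - a"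
    with \<open>y \<le> pi\<close> assms(1) have "0 < sin (y - (b - a))" by (intro sin_gt_zero) auto
    moreover have "sin (y - (b - a)) = sin (x - b)"
      using sin_add_2pi_int[of "x - b" n] by (simp add: y_def algebra_simps)
    ultimately show False using assms(4) by simp
  qed
  with \<open>0 \<le> y\<close> show ?thesis by (intro that[of n]) (auto simp: y_def)
qed

lemma cos_eq_minus_1_if_sin_eq_0:
  fixes x :: real
  assumes "sin x = 0" "cos x \<le> 0"
  shows "cos x = -1"
  using sin_cos_squared_add[of x] assms by (simp add: power2_eq_1_iff)

lemma sin_diff_commute: "sin (x - y) = - sin (y - x)"
  by (metis minus_diff_eq sin_minus)

lemma supporting_hyperplane_frontier:
  fixes S :: "'a::euclidean_space set"
  assumes "convex S" "x \<in> S" "x \<in> frontier S"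
  obtains a where "a \<noteq> 0" "\<And>y. y \<in> S \<Longrightarrow> a \<bullet> x \<le> a \<bullet> y"
proof (cases "aff_dim S = int DIM('a)")
  case True
  then have "x \<notin> rel_interior S"
    using assms(3) by (simp add: frontier_def interior_rel_interior)
  then obtain a where "a \<noteq> 0" "\<And>y. y \<in> closure S \<Longrightarrow> a \<bullet> x \<le> a \<bullet> y"
    using supporting_hyperplane_relative_frontier[OF assms(1)] assms(2) closure_subset by (metis subsetD)
  then show ?thesis using that closure_subset by (meson subsetD)
next
  case False
  then have "aff_dim S < DIM('a)" using aff_dim_le_DIM[of S] by linarith
  then obtain a b where "a \<noteq> 0" "S \<subseteq> {x. a \<bullet> x = b}" by (rule aff_lowdim_subset_hyperplane)
  then show ?thesis using that assms(2) by (metis (mono_tags, lifting) mem_Collect_eq order_refl subsetD)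
qed

lemma inner_real2: "(x::real^2) \<bullet> y = x$1 * y$1 + x$2 * y$2"
  by (simp add: inner_vec_def sum_2)

lemma vec2_eq_iff: "(x::real^2) = y \<longleftrightarrow> x$1 = y$1 \<and> x$2 = y$2"
  by (simp add: vec_eq_iff forall_2)

text \<open>The coordinates of \<open>Q - P\<close> in the frame rotated by the angle \<open>a\<close>: along
  \<open>(cos a, sin a)\<close> and along the left normal \<open>(- sin a, cos a)\<close>.\<close>

definition tangent_offset :: "real \<Rightarrow> real^2 \<Rightarrow> real^2 \<Rightarrow> real" where
  "tangent_offset a P Q = cos a * (Q$1 - P$1) + sin a * (Q$2 - P$2)"

definition normal_offset :: "real \<Rightarrow> real^2 \<Rightarrow> real^2 \<Rightarrow> real" where
  "normal_offset a P Q = cos a * (Q$2 - P$2) - sin a * (Q$1 - P$1)"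

lemma offset_self [simp]: "tangent_offset a P P = 0" "normal_offset a P P = 0"
  by (simp_all add: tangent_offset_def normal_offset_def)

lemma offset_swap: "tangent_offset a Q P = - tangent_offset a P Q" "normal_offset a Q P = - normal_offset a P Q"
  by (simp_all add: tangent_offset_def normal_offset_def algebra_simps)

lemma normal_offset_add_pi [simp]: "normal_offset (a + pi) P Q = - normal_offset a P Q"
  by (simp add: normal_offset_def)


lemma offset_add_2pi [simp]:
  "tangent_offset (a + 2 * pi) P Q = tangent_offset a P Q"
  "normal_offset (a + 2 * pi) P Q = normal_offset a P Q"
  by (simp_all add: tangent_offset_def normal_offset_def)

lemma normal_offset_change_base: "normal_offset a Q X = normal_offset a P X - normal_offset a P Q"
  by (simp add: normal_offset_def algebra_simps)

lemma rotation_inverse: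
  fixes a x y :: real
  shows "x = (x * cos a + y * sin a) * cos a - (y * cos a - x * sin a) * sin a"
    and "y = (x * cos a + y * sin a) * sin a + (y * cos a - x * sin a) * cos a"
proof -
  have "(x * cos a + y * sin a) * cos a - (y * cos a - x * sin a) * sin a = x * ((sin a)\<^sup>2 + (cos a)\<^sup>2)"
    "(x * cos a + y * sin a) * sin a + (y * cos a - x * sin a) * cos a = y * ((sin a)\<^sup>2 + (cos a)\<^sup>2)"
    by (simp_all add: algebra_simps power2_eq_square del: sin_cos_squared_add sin_cos_squared_add2 sin_cos_squared_add3)
  then show "x = (x * cos a + y * sin a) * cos a - (y * cos a - x * sin a) * sin a"
    "y = (x * cos a + y * sin a) * sin a + (y * cos a - x * sin a) * cos a"
    by simp_all
qed

lemma eq_if_offsets_eq_0: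
  assumes "tangent_offset a P Q = 0" "normal_offset a P Q = 0"
  shows "Q = P"
proof -
  have h: "(Q$1 - P$1) * cos a + (Q$2 - P$2) * sin a = 0" "(Q$2 - P$2) * cos a - (Q$1 - P$1) * sin a = 0"
    using assms by (simp_all add: tangent_offset_def normal_offset_def mult.commute)
  from rotation_inverse[where a=a and x="Q$1 - P$1" and y="Q$2 - P$2"] show ?thesis
    unfolding h by (simp add: vec2_eq_iff)
qed

lemma offsets_polar:
  assumes "Q$1 - P$1 = d * cos \<psi>" "Q$2 - P$2 = d * sin \<psi>"
  shows "tangent_offset a P Q = d * cos (\<psi> - a)" "normal_offset a P Q = d * sin (\<psi> - a)"
  using assms by (simp_all add: tangent_offset_def normal_offset_def cos_diff sin_diff algebra_simps)

lemma polar_form: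
  assumes "P \<noteq> (Q::real^2)"
  obtains d \<psi> where "0 < d" "Q$1 - P$1 = d * cos \<psi>" "Q$2 - P$2 = d * sin \<psi>"
proof -
  define d where "d = norm (Q - P)"
  have "0 < d" using assms by (simp add: d_def)
  have "d = sqrt ((Q$1 - P$1)\<^sup>2 + (Q$2 - P$2)\<^sup>2)"
    by (simp add: d_def norm_eq_sqrt_inner inner_real2 power2_eq_square)
  then have d2: "d\<^sup>2 = (Q$1 - P$1)\<^sup>2 + (Q$2 - P$2)\<^sup>2" by simp
  have "((Q$1 - P$1) / d)\<^sup>2 + ((Q$2 - P$2) / d)\<^sup>2 = ((Q$1 - P$1)\<^sup>2 + (Q$2 - P$2)\<^sup>2) / d\<^sup>2"
    by (simp add: power_divide add_divide_distrib)
  also have "\<dots> = 1" using \<open>0 < d\<close> by (simp flip: d2)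
  finally have "((Q$1 - P$1) / d)\<^sup>2 + ((Q$2 - P$2) / d)\<^sup>2 = 1" .
  then obtain \<psi> where "(Q$1 - P$1) / d = cos \<psi>" "(Q$2 - P$2) / d = sin \<psi>"
    by (rule sincos_total_2pi)
  with \<open>0 < d\<close> show ?thesis by (intro that[of d \<psi>]) (auto simp: field_simps)
qed

lemma inner_eq_normal_offset:
  fixes n :: "real^2"
  assumes "n$1 * cos a + n$2 * sin a = 0"
  shows "n \<bullet> (Q - P) = (n$2 * cos a - n$1 * sin a) * normal_offset a P Q"
proof -
  have "n \<bullet> (Q - P) = (n$1 * (Q$1 - P$1) + n$2 * (Q$2 - P$2)) * ((sin a)\<^sup>2 + (cos a)\<^sup>2)"
    by (simp add: inner_real2)
  also have "\<dots> = (n$2 * cos a - n$1 * sin a) * normal_offset a P Q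
      + (n$1 * cos a + n$2 * sin a) * tangent_offset a P Q"
    by (simp add: normal_offset_def tangent_offset_def algebra_simps power2_eq_square
        del: sin_cos_squared_add sin_cos_squared_add2 sin_cos_squared_add3)
  finally show ?thesis using assms by simp
qed

lemma normal_coefficient_nonzero:
  fixes n :: "real^2"
  assumes "n \<noteq> 0" "n$1 * cos a + n$2 * sin a = 0"
  shows "n$2 * cos a - n$1 * sin a \<noteq> 0"
proof
  assume "n$2 * cos a - n$1 * sin a = 0"
  moreover have "(n$1 * cos a + n$2 * sin a)\<^sup>2 + (n$2 * cos a - n$1 * sin a)\<^sup>2
      = ((n$1)\<^sup>2 + (n$2)\<^sup>2) * ((sin a)\<^sup>2 + (cos a)\<^sup>2)"
    by (simp add: algebra_simps power2_eq_square
        del: sin_cos_squared_add sin_cos_squared_add2 sin_cos_squared_add3)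
  ultimately have "(n$1)\<^sup>2 + (n$2)\<^sup>2 = 0" using assms(2) by simp
  with assms(1) show False by (simp add: vec2_eq_iff sum_power2_eq_zero_iff)
qed

lemma offsets_rotate:
  "tangent_offset b P Q = tangent_offset a P Q * cos (a - b) - normal_offset a P Q * sin (a - b)"
  "normal_offset b P Q = tangent_offset a P Q * sin (a - b) + normal_offset a P Q * cos (a - b)"
proof -
  have "tangent_offset a P Q * cos (a - b) - normal_offset a P Q * sin (a - b)
      = tangent_offset b P Q * ((sin a)\<^sup>2 + (cos a)\<^sup>2)"
    "tangent_offset a P Q * sin (a - b) + normal_offset a P Q * cos (a - b)
      = normal_offset b P Q * ((sin a)\<^sup>2 + (cos a)\<^sup>2)"
    by (simp_all add: tangent_offset_def normal_offset_def sin_diff cos_diff algebra_simps power2_eq_square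
        del: sin_cos_squared_add sin_cos_squared_add2 sin_cos_squared_add3)
  then show "tangent_offset b P Q = tangent_offset a P Q * cos (a - b) - normal_offset a P Q * sin (a - b)"
    "normal_offset b P Q = tangent_offset a P Q * sin (a - b) + normal_offset a P Q * cos (a - b)"
    by simp_all
qed

lemma normal_offset_convex_combination:
  assumes "u + v = 1"
  shows "normal_offset a P (u *\<^sub>R X + v *\<^sub>R Y) = u * normal_offset a P X + v * normal_offset a P Y"
proof -
  from assms have v: "v = 1 - u" by simp
  show ?thesis by (simp add: v normal_offset_def algebra_simps)
qed

text \<open>The triangle cut off by the chord \<open>AB\<close> (of direction \<open>\<psi>\<close>) and the lines through
  \<open>A\<close> and \<open>B\<close> with directions \<open>a0\<close> and \<open>a1\<close>.\<close>

definition tangent_triangle :: "real \<Rightarrow> real \<Rightarrow> real \<Rightarrow> real^2 \<Rightarrow> real^2 \<Rightarrow> (real^2) set" where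
  "tangent_triangle a0 a1 \<psi> A B =
     {X. 0 \<le> normal_offset a0 A X \<and> 0 \<le> normal_offset a1 B X \<and> normal_offset \<psi> A X \<le> 0}"

lemma convex_tangent_triangle: "convex (tangent_triangle a0 a1 \<psi> A B)"
  unfolding convex_def tangent_triangle_def
  by (auto simp: normal_offset_convex_combination
      intro!: add_nonneg_nonneg mult_nonneg_nonneg add_nonpos_nonpos mult_nonneg_nonpos)

section \<open>Regular curves and their tangent angle\<close>

locale regular_curve =
  fixes g :: "real \<Rightarrow> real^2"
  assumes regular: "regular_C2_curve g"
begin

definition "vx t = vel g t $ 1"
definition "vy t = vel g t $ 2"
definition "ax t = acc g t $ 1"
definition "ay t = acc g t $ 2"
definition "speed t = sqrt ((vx t)\<^sup>2 + (vy t)\<^sup>2)"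
definition "turn_rate t = (vx t * ay t - vy t * ax t) / (speed t)\<^sup>2"

lemma curve_has_derivative: "t \<in> {0..1} \<Longrightarrow> (g has_vector_derivative vel g t) (at t within {0..1})"
  and vel_has_derivative: "t \<in> {0..1} \<Longrightarrow> (vel g has_vector_derivative acc g t) (at t within {0..1})"
  and vel_nonzero: "t \<in> {0..1} \<Longrightarrow> vel g t \<noteq> 0"
  and continuous_on_acc: "continuous_on {0..1} (acc g)"
  using regular by (simp_all add: regular_C2_curve_def)

lemma continuous_on_curve: "continuous_on {0..1} g"
  and continuous_on_vel: "continuous_on {0..1} (vel g)"
  using curve_has_derivative vel_has_derivative
  by (metis continuous_on_eq_continuous_within has_vector_derivative_continuous)+

lemma coords_has_derivative:
  assumes "t \<in> {0..1}"
  shows "((\<lambda>u. g u $ 1) has_real_derivative vx t) (at t within {0..1})"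
    and "((\<lambda>u. g u $ 2) has_real_derivative vy t) (at t within {0..1})"
    and "(vx has_real_derivative ax t) (at t within {0..1})"
    and "(vy has_real_derivative ay t) (at t within {0..1})"
  using has_vector_derivative_nth[OF curve_has_derivative[OF assms]]
    has_vector_derivative_nth[OF vel_has_derivative[OF assms]]
  by (simp_all add: vx_def[abs_def] vy_def[abs_def] ax_def ay_def)

lemma norm_vel_eq_speed: "norm (vel g t) = speed t"
  by (simp add: norm_eq_sqrt_inner inner_real2 speed_def vx_def vy_def power2_eq_square)

lemma speed_pos: "t \<in> {0..1} \<Longrightarrow> 0 < speed t"
  using vel_nonzero norm_vel_eq_speed by (metis zero_less_norm_iff)

lemma turn_rate_eq: "t \<in> {0..1} \<Longrightarrow> turn_rate t = curvature g t * speed t"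
  using speed_pos[of t]
  by (simp add: curvature_def norm_vel_eq_speed turn_rate_def vx_def vy_def ax_def ay_def
      field_simps power2_eq_square power3_eq_cube)

lemma total_curvature_eq: "total_curvature g = integral {0..1} turn_rate"
  unfolding total_curvature_def
  by (rule integral_cong) (simp add: turn_rate_eq norm_vel_eq_speed)

lemma continuous_on_speed: "continuous_on {0..1} speed"
  and continuous_on_turn_rate: "continuous_on {0..1} turn_rate"
proof -
  have "continuous_on {0..1} vx" "continuous_on {0..1} vy" "continuous_on {0..1} ax" "continuous_on {0..1} ay"
    unfolding vx_def[abs_def] vy_def[abs_def] ax_def[abs_def] ay_def[abs_def]
    by (intro continuous_intros continuous_on_vel continuous_on_acc)+
  then show "continuous_on {0..1} speed" "continuous_on {0..1} turn_rate"
    unfolding speed_def[abs_def] turn_rate_def[abs_def]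
    by (intro continuous_intros; fastforce dest: speed_pos simp: speed_def)+
qed

lemma continuous_on_curvature: "continuous_on {0..1} (curvature g)"
proof -
  have "continuous_on {0..1} (\<lambda>t. turn_rate t / speed t)"
    by (intro continuous_intros continuous_on_turn_rate continuous_on_speed) (fastforce dest: speed_pos)
  then show ?thesis
    by (rule continuous_on_eq) (simp add: turn_rate_eq speed_pos less_imp_neq[symmetric])
qed

lemma curvature_le_SUP: "t \<in> {0..1} \<Longrightarrow> curvature g t \<le> (SUP t\<in>{0..1}. curvature g t)"
  using compact_continuous_image[OF continuous_on_curvature compact_Icc]
  by (intro cSUP_upper bounded_imp_bdd_above compact_imp_bounded)

lemma speed_has_derivative:
  assumes t: "t \<in> {0..1}"
  shows "(speed has_real_derivative (vx t * ax t + vy t * ay t) / speed t) (at t within {0..1})"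
proof -
  have "0 < (vx t)\<^sup>2 + (vy t)\<^sup>2"
    using speed_pos[OF t] by (simp add: speed_def)
  from DERIV_chain2[OF DERIV_real_sqrt[OF this] DERIV_add[OF
        DERIV_power[OF coords_has_derivative(3)[OF t]] DERIV_power[OF coords_has_derivative(4)[OF t]]]]
  show ?thesis
    unfolding speed_def[symmetric, abs_def]
    by (rule DERIV_cong) (use speed_pos[OF t] in \<open>simp add: field_simps\<close>)
qed

lemma unit_tangent_has_derivative:
  assumes t: "t \<in> {0..1}"
  shows "((\<lambda>u. vx u / speed u) has_real_derivative - (vy t / speed t) * turn_rate t) (at t within {0..1})"
    and "((\<lambda>u. vy u / speed u) has_real_derivative (vx t / speed t) * turn_rate t) (at t within {0..1})"
proof -
  have quotients:
    "(a * s - x * ((x * a + y * b) / s)) / (s * s) = - (y / s) * ((x * b - y * a) / s\<^sup>2)"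
    "(b * s - y * ((x * a + y * b) / s)) / (s * s) = (x / s) * ((x * b - y * a) / s\<^sup>2)"
    if "s \<noteq> 0" "s * s = x * x + y * y" for a b x y s :: real
  proof -
    have "(c * s - w * ((x * a + y * b) / s)) / (s * s) = (c * (s * s) - w * (x * a + y * b)) / (s * s * s)"
      for c w using that(1) by (simp add: field_simps)
    moreover have "a * (s * s) - x * (x * a + y * b) = - y * (x * b - y * a)"
      "b * (s * s) - y * (x * a + y * b) = x * (x * b - y * a)"
      unfolding that(2) by (simp_all add: algebra_simps)
    ultimately show "(a * s - x * ((x * a + y * b) / s)) / (s * s) = - (y / s) * ((x * b - y * a) / s\<^sup>2)"
      "(b * s - y * ((x * a + y * b) / s)) / (s * s) = (x / s) * ((x * b - y * a) / s\<^sup>2)"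
      by (simp_all add: power2_eq_square)
  qed
  have ne: "speed t \<noteq> 0" using speed_pos[OF t] by simp
  have sq: "speed t * speed t = vx t * vx t + vy t * vy t"
    by (simp add: speed_def flip: power2_eq_square)
  show "((\<lambda>u. vx u / speed u) has_real_derivative - (vy t / speed t) * turn_rate t) (at t within {0..1})"
    by (rule DERIV_cong[OF DERIV_divide[OF coords_has_derivative(3)[OF t] speed_has_derivative[OF t] ne]])
      (simp only: quotients[OF ne sq] turn_rate_def)
  show "((\<lambda>u. vy u / speed u) has_real_derivative (vx t / speed t) * turn_rate t) (at t within {0..1})"
    by (rule DERIV_cong[OF DERIV_divide[OF coords_has_derivative(4)[OF t] speed_has_derivative[OF t] ne]])
      (simp only: quotients[OF ne sq] turn_rate_def)
qed

definition "initial_angle = (SOME \<theta>. cos \<theta> = vx 0 / speed 0 \<and> sin \<theta> = vy 0 / speed 0)"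

definition "tangent_angle t = initial_angle + integral {0..t} turn_rate"

lemma unit_tangent_norm: "t \<in> {0..1} \<Longrightarrow> (vx t / speed t)\<^sup>2 + (vy t / speed t)\<^sup>2 = 1"
proof -
  assume t: "t \<in> {0..1}"
  have "(vx t / speed t)\<^sup>2 + (vy t / speed t)\<^sup>2 = ((vx t)\<^sup>2 + (vy t)\<^sup>2) / (speed t)\<^sup>2"
    by (simp add: power_divide add_divide_distrib)
  also have "(vx t)\<^sup>2 + (vy t)\<^sup>2 = (speed t)\<^sup>2"
    by (simp add: speed_def)
  finally show ?thesis using speed_pos[OF t] by simp
qed

lemma initial_angle: "cos initial_angle = vx 0 / speed 0" "sin initial_angle = vy 0 / speed 0"
proof -
  have "(vx 0 / speed 0)\<^sup>2 + (vy 0 / speed 0)\<^sup>2 = 1" by (rule unit_tangent_norm) simp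
  then obtain \<theta> where "vx 0 / speed 0 = cos \<theta>" "vy 0 / speed 0 = sin \<theta>"
    by (rule sincos_total_2pi)
  then have "\<exists>\<theta>. cos \<theta> = vx 0 / speed 0 \<and> sin \<theta> = vy 0 / speed 0" by metis
  from someI_ex[OF this] show "cos initial_angle = vx 0 / speed 0" "sin initial_angle = vy 0 / speed 0"
    unfolding initial_angle_def by simp_all
qed

lemma tangent_angle_has_derivative:
  "t \<in> {0..1} \<Longrightarrow> (tangent_angle has_real_derivative turn_rate t) (at t within {0..1})"
  unfolding tangent_angle_def[abs_def]
  by (rule derivative_eq_intros integral_has_real_derivative[OF continuous_on_turn_rate] | simp)+

lemma continuous_on_tangent_angle: "continuous_on {0..1} tangent_angle"
  using tangent_angle_has_derivative continuous_on_eq_continuous_within DERIV_continuous by blast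

lemma total_turn_eq_total_curvature: "tangent_angle 1 - tangent_angle 0 = total_curvature g"
  by (simp add: tangent_angle_def total_curvature_eq)

text \<open>The unit tangent \<open>(c, s)\<close> and \<open>(cos \<theta>, sin \<theta>)\<close> solve the same linear ODE
  \<open>(c, s)' = turn_rate * (- s, c)\<close> with the same initial value, so their inner product
  stays \<open>1\<close> and their cross product stays \<open>0\<close>.\<close>

lemma vel_polar:
  assumes t: "t \<in> {0..1}"
  shows "vx t = speed t * cos (tangent_angle t)" "vy t = speed t * sin (tangent_angle t)"
proof -
  define c where "c u = vx u / speed u" for u
  define s where "s u = vy u / speed u" for u
  define I where "I u = c u * cos (tangent_angle u) + s u * sin (tangent_angle u)" for u
  define X where "X u = s u * cos (tangent_angle u) - c u * sin (tangent_angle u)" for u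
  have "(I has_real_derivative 0) (at u within {0..1})" "(X has_real_derivative 0) (at u within {0..1})"
    if u: "u \<in> {0..1}" for u
    unfolding I_def[abs_def] X_def[abs_def] c_def[abs_def] s_def[abs_def]
    by (rule derivative_eq_intros unit_tangent_has_derivative[OF u] tangent_angle_has_derivative[OF u] refl
        | simp add: algebra_simps)+
  then obtain kI kX where "\<forall>u\<in>{0..1}. I u = kI" "\<forall>u\<in>{0..1}. X u = kX"
    using has_field_derivative_zero_constant[of "{0..1::real}"] by (metis convex_real_interval(5))
  moreover have "I 0 = 1" "X 0 = 0"
    using initial_angle unit_tangent_norm[of 0]
    by (simp_all add: I_def X_def c_def s_def tangent_angle_def algebra_simps power2_eq_square)
  ultimately have "I t = 1" "X t = 0" using t by auto
  then have "c t = cos (tangent_angle t)" "s t = sin (tangent_angle t)"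
    using rotation_inverse[where a="tangent_angle t" and x="c t" and y="s t"]
    unfolding I_def X_def by simp_all
  then show "vx t = speed t * cos (tangent_angle t)" "vy t = speed t * sin (tangent_angle t)"
    using speed_pos[OF t] by (simp_all add: c_def s_def field_simps)
qed

lemma normal_offset_has_derivative:
  assumes t: "t \<in> {0..1}"
  shows "((\<lambda>u. normal_offset a P (g u)) has_real_derivative speed t * sin (tangent_angle t - a))
    (at t within {0..1})"
  unfolding normal_offset_def
  by (rule derivative_eq_intros coords_has_derivative[OF t] refl | simp)+
    (simp add: vel_polar[OF t] sin_diff algebra_simps)

lemma tangent_offset_has_derivative:
  assumes t: "t \<in> {0..1}"
  shows "((\<lambda>u. tangent_offset a P (g u)) has_real_derivative speed t * cos (tangent_angle t - a))
    (at t within {0..1})"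
  unfolding tangent_offset_def
  by (rule derivative_eq_intros coords_has_derivative[OF t] refl | simp)+
    (simp add: vel_polar[OF t] cos_diff algebra_simps)

lemma normal_offset_from_tangent_has_derivative:
  assumes t: "t \<in> {0..1}"
  shows "((\<lambda>u. normal_offset (tangent_angle u) (g u) P) has_real_derivative
      - turn_rate t * tangent_offset (tangent_angle t) (g t) P) (at t within {0..1})"
  unfolding normal_offset_def
  by (rule derivative_eq_intros coords_has_derivative[OF t] tangent_angle_has_derivative[OF t] refl | simp)+
    (simp add: vel_polar[OF t] tangent_offset_def algebra_simps)

lemma sin_start_angle_nonneg:
  assumes "\<And>u. u \<in> {0..1} \<Longrightarrow> normal_offset a P (g 0) \<le> normal_offset a P (g u)"
  shows "0 \<le> sin (tangent_angle 0 - a)"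
proof -
  have "0 \<le> speed 0 * sin (tangent_angle 0 - a)"
    by (rule min_right_deriv_nonneg[OF normal_offset_has_derivative]) (use assms in auto)
  with speed_pos[of 0] show ?thesis by (simp add: zero_le_mult_iff)
qed

lemma sin_finish_angle_nonpos:
  assumes "\<And>u. u \<in> {0..1} \<Longrightarrow> normal_offset a P (g 1) \<le> normal_offset a P (g u)"
  shows "sin (tangent_angle 1 - a) \<le> 0"
proof -
  have "speed 1 * sin (tangent_angle 1 - a) \<le> 0"
    by (rule min_left_deriv_nonpos[OF normal_offset_has_derivative]) (use assms in auto)
  with speed_pos[of 1] show ?thesis by (simp add: mult_le_0_iff)
qed

lemma sin_start_angle_nonpos:
  assumes "\<And>u. u \<in> {0..1} \<Longrightarrow> normal_offset a P (g u) \<le> normal_offset a P (g 0)"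
  shows "sin (tangent_angle 0 - a) \<le> 0"
proof -
  have "0 \<le> sin (tangent_angle 0 - (a + pi))"
    by (rule sin_start_angle_nonneg) (use assms in simp)
  then show ?thesis by (simp add: sin_diff)
qed

lemma sin_finish_angle_nonneg:
  assumes "\<And>u. u \<in> {0..1} \<Longrightarrow> normal_offset a P (g u) \<le> normal_offset a P (g 1)"
  shows "0 \<le> sin (tangent_angle 1 - a)"
proof -
  have "sin (tangent_angle 1 - (a + pi)) \<le> 0"
    by (rule sin_finish_angle_nonpos) (use assms in simp)
  then show ?thesis by (simp add: sin_diff)
qed

text \<open>Comparing \<open>tangent_offset b (g 0) (g u)\<close>, the integral of \<open>cos (\<theta> - b) ds\<close>, with
  \<open>sin (\<theta> - b) / K\<close>, the integral of \<open>cos (\<theta> - b) d\<theta> / K\<close>: since \<open>d\<theta> = \<kappa> ds\<close>,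
  the sign of the difference is governed by \<open>\<kappa> - K\<close> where \<open>cos (\<theta> - b) \<ge> 0\<close>.\<close>

lemma chord_projection_comparison_has_derivative:
  assumes u: "u \<in> {0..1}"
  shows "((\<lambda>u. sin (tangent_angle u - b) - K * tangent_offset b (g 0) (g u)) has_real_derivative
      cos (tangent_angle u - b) * (turn_rate u - K * speed u)) (at u within {0..1})"
  by (rule derivative_eq_intros tangent_angle_has_derivative[OF u] tangent_offset_has_derivative[OF u]
      refl | simp)+ (simp add: algebra_simps)

lemma chord_projection_le:
  assumes "0 < m" "\<And>t. t \<in> {0..1} \<Longrightarrow> m \<le> curvature g t"
    and "\<And>u. u \<in> {0..1} \<Longrightarrow> 0 \<le> cos (tangent_angle u - b)"
  shows "tangent_offset b (g 0) (g 1) \<le> (sin (tangent_angle 1 - b) - sin (tangent_angle 0 - b)) / m"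
proof -
  have "sin (tangent_angle 0 - b) - m * tangent_offset b (g 0) (g 0)
      \<le> sin (tangent_angle 1 - b) - m * tangent_offset b (g 0) (g 1)"
  proof (rule has_real_derivative_nonneg_imp_le[OF _ _ chord_projection_comparison_has_derivative])
    fix u :: real assume u: "u \<in> {0..1}"
    have "m * speed u \<le> turn_rate u"
      using assms(2)[OF u] speed_pos[OF u] by (simp add: turn_rate_eq[OF u] mult_right_mono)
    with assms(3)[OF u] show "0 \<le> cos (tangent_angle u - b) * (turn_rate u - m * speed u)"
      by simp
  qed auto
  with assms(1) show ?thesis by (simp add: field_simps)
qed

lemma chord_projection_ge:
  assumes "0 < M" "\<And>t. t \<in> {0..1} \<Longrightarrow> curvature g t \<le> M"
    and "\<And>u. u \<in> {0..1} \<Longrightarrow> 0 \<le> cos (tangent_angle u - b)"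
  shows "(sin (tangent_angle 1 - b) - sin (tangent_angle 0 - b)) / M \<le> tangent_offset b (g 0) (g 1)"
proof -
  have "- (sin (tangent_angle 0 - b) - M * tangent_offset b (g 0) (g 0))
      \<le> - (sin (tangent_angle 1 - b) - M * tangent_offset b (g 0) (g 1))"
  proof (rule has_real_derivative_nonneg_imp_le[OF _ _ DERIV_minus[OF chord_projection_comparison_has_derivative]])
    fix u :: real assume u: "u \<in> {0..1}"
    have "turn_rate u \<le> M * speed u"
      using assms(2)[OF u] speed_pos[OF u] by (simp add: turn_rate_eq[OF u] mult_right_mono)
    with assms(3)[OF u] show "0 \<le> - (cos (tangent_angle u - b) * (turn_rate u - M * speed u))"
      by (simp add: mult_nonneg_nonpos)
  qed auto
  with assms(1) show ?thesis by (simp add: field_simps)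
qed

lemma sin_angle_eq_0_if_on_line:
  assumes "\<And>u. u \<in> {0..1} \<Longrightarrow> normal_offset a P (g u) = 0" "0 < t" "t < 1"
  shows "sin (tangent_angle t - a) = 0"
proof -
  have t: "t \<in> {0..1}" using assms(2,3) by simp
  have min: "normal_offset a P (g t) \<le> normal_offset a P (g u)" if "u \<in> {0..1}" for u
    using assms(1)[OF that] assms(1)[OF t] by simp
  have "0 \<le> speed t * sin (tangent_angle t - a)"
    by (rule min_right_deriv_nonneg[OF normal_offset_has_derivative[OF t, of a P]]) (use assms min in auto)
  moreover have "speed t * sin (tangent_angle t - a) \<le> 0"
    by (rule min_left_deriv_nonpos[OF normal_offset_has_derivative[OF t, of a P]]) (use assms min in auto)
  ultimately show ?thesis using speed_pos[OF t] by (simp add: zero_le_mult_iff mult_le_0_iff)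
qed

lemma chord_projection_le_half_angle:
  fixes n :: int
  assumes "0 < m" "\<And>t. t \<in> {0..1} \<Longrightarrow> m \<le> curvature g t" "a1 - a0 \<le> pi"
    and range: "\<And>u. u \<in> {0..1} \<Longrightarrow> a0 \<le> tangent_angle u + 2 * pi * n \<and> tangent_angle u + 2 * pi * n \<le> a1"
  shows "tangent_offset ((a0 + a1) / 2) (g 0) (g 1) \<le> 2 * sin ((a1 - a0) / 2) / m"
proof -
  define b where "b = (a0 + a1) / 2"
  define w where "w u = tangent_angle u + 2 * pi * n - b" for u
  have periodic: "cos (tangent_angle u - b) = cos (w u)" "sin (tangent_angle u - b) = sin (w u)" for u
    using cos_add_2pi_int[of "tangent_angle u - b" n] sin_add_2pi_int[of "tangent_angle u - b" n]
    by (simp_all add: w_def algebra_simps)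
  have bound: "- ((a1 - a0) / 2) \<le> w u" "w u \<le> (a1 - a0) / 2" "- (pi / 2) \<le> w u" "w u \<le> pi / 2"
    if "u \<in> {0..1}" for u
    using range[OF that] assms(3) by (auto simp: w_def b_def field_simps)
  have half: "(a1 - a0) / 2 \<le> pi / 2" "- (pi / 2) \<le> - ((a1 - a0) / 2)" using assms(3) by simp_all
  have cos_nonneg: "0 \<le> cos (tangent_angle u - b)" if "u \<in> {0..1}" for u
    unfolding periodic using bound[OF that] by (intro cos_ge_zero)
  have "tangent_offset b (g 0) (g 1) \<le> (sin (tangent_angle 1 - b) - sin (tangent_angle 0 - b)) / m"
    by (rule chord_projection_le[OF assms(1,2) cos_nonneg])
  also have "\<dots> \<le> (sin ((a1 - a0) / 2) - sin (- ((a1 - a0) / 2))) / m"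
  proof -
    have "- (pi / 2) \<le> w 1" "w 1 \<le> (a1 - a0) / 2" "- ((a1 - a0) / 2) \<le> w 0" "w 0 \<le> pi / 2"
      using bound[of 1] bound[of 0] by simp_all
    then have "sin (w 1) \<le> sin ((a1 - a0) / 2)" "sin (- ((a1 - a0) / 2)) \<le> sin (w 0)"
      using sin_monotone_2pi_le half by blast+
    then show ?thesis using assms(1) unfolding periodic by (simp add: divide_right_mono)
  qed
  finally show ?thesis by (simp add: b_def)
qed

end

section \<open>Convex arcs\<close>

locale convex_arc =
  fixes g :: "real \<Rightarrow> real^2"
  assumes convex: "convex_curve g"

sublocale convex_arc \<subseteq> regular_curve
  using convex by unfold_locales (simp add: convex_curve_def)

context convex_arc
begin

lemma curvature_pos: "t \<in> {0..1} \<Longrightarrow> 0 < curvature g t"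
  using convex by (simp add: convex_curve_def)

lemma INF_le_curvature: "t \<in> {0..1} \<Longrightarrow> (INF t\<in>{0..1}. curvature g t) \<le> curvature g t"
  using curvature_pos by (intro cINF_lower bdd_belowI2[of _ 0]) (auto intro: less_imp_le)

lemma curve_eqD: "s \<in> {0..1} \<Longrightarrow> t \<in> {0..1} \<Longrightarrow> g s = g t \<Longrightarrow> s = t"
  using convex by (auto simp: convex_curve_def arc_def inj_on_def)

lemma turn_rate_pos: "t \<in> {0..1} \<Longrightarrow> 0 < turn_rate t"
  by (simp add: turn_rate_eq curvature_pos speed_pos)

lemma tangent_angle_less:
  assumes "s \<in> {0..1}" "t \<in> {0..1}" "s < t"
  shows "tangent_angle s < tangent_angle t"
proof (rule has_real_derivative_pos_imp_less[OF \<open>s < t\<close>])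
  show "{s..t} \<subseteq> {0..1}" using assms by auto
  show "(tangent_angle has_real_derivative turn_rate x) (at x within {0..1})" if "x \<in> {s..t}" for x
    using that assms by (intro tangent_angle_has_derivative) auto
  show "0 < turn_rate x" if "x \<in> {s<..<t}" for x
    using that assms by (intro turn_rate_pos) auto
qed

lemma tangent_angle_le: "s \<in> {0..1} \<Longrightarrow> t \<in> {0..1} \<Longrightarrow> s \<le> t \<Longrightarrow> tangent_angle s \<le> tangent_angle t"
  using tangent_angle_less by (cases "s = t") (auto intro: less_imp_le)

lemma normal_offset_pos_after:
  assumes "0 \<le> t" "t < 1"
  obtains u where "u \<in> {0..1}" "0 < normal_offset (tangent_angle t) (g t) (g u)"
proof -
  have t: "t \<in> {0..1}" using assms by simp
  obtain d where "0 < d" and d: "\<And>u. u \<in> {0..1} \<Longrightarrow> dist u t < d \<Longrightarrow> dist (tangent_angle u) (tangent_angle t) < pi"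
    using continuous_on_tangent_angle t pi_gt_zero unfolding continuous_on_iff by blast
  define u where "u = t + min d (1 - t) / 2"
  have "t < u" "u \<le> 1" "u - t < d" using assms \<open>0 < d\<close> by (auto simp: u_def min_def field_simps)
  have "normal_offset (tangent_angle t) (g t) (g t) < normal_offset (tangent_angle t) (g t) (g u)"
  proof (rule has_real_derivative_pos_imp_less[OF \<open>t < u\<close>])
    show "{t..u} \<subseteq> {0..1}" using assms \<open>u \<le> 1\<close> by auto
    show "((\<lambda>u. normal_offset (tangent_angle t) (g t) (g u)) has_real_derivative
        speed x * sin (tangent_angle x - tangent_angle t)) (at x within {0..1})" if "x \<in> {t..u}" for x
      using that assms \<open>u \<le> 1\<close> by (intro normal_offset_has_derivative) auto
    show "0 < speed x * sin (tangent_angle x - tangent_angle t)" if x: "x \<in> {t<..<u}" for x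
    proof -
      have xI: "x \<in> {0..1}" using x assms \<open>u \<le> 1\<close> by auto
      have "tangent_angle t < tangent_angle x" using tangent_angle_less[OF t xI] x by simp
      moreover have "dist (tangent_angle x) (tangent_angle t) < pi"
        using d[OF xI] x \<open>u - t < d\<close> by (simp add: dist_real_def)
      ultimately have "0 < sin (tangent_angle x - tangent_angle t)"
        by (intro sin_gt_zero) (auto simp: dist_real_def)
      with speed_pos[OF xI] show ?thesis by simp
    qed
  qed
  with \<open>t < u\<close> \<open>u \<le> 1\<close> assms show ?thesis by (intro that[of u]) auto
qed

text \<open>At an interior point the supporting line of the convex hull must be the tangent line,
  and the hull lies on its left because the curve turns left right after the point.\<close>

lemma left_of_tangent_interior:
  assumes "0 < t" "t < 1" "s \<in> {0..1}"
  shows "0 \<le> normal_offset (tangent_angle t) (g t) (g s)"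
proof -
  have t: "t \<in> {0..1}" using assms by simp
  define K where "K = convex hull (path_image g)"
  have gK: "g u \<in> K" if "u \<in> {0..1}" for u
    using that hull_subset[of "path_image g" convex] unfolding K_def path_image_def by blast
  have "convex K" by (simp add: K_def)
  have "path_image g \<subseteq> frontier K"
    using convex by (simp add: K_def convex_curve_def)
  then have "g t \<in> frontier K"
    using t by (auto simp: path_image_def)
  then obtain n where "n \<noteq> 0" and n: "\<And>y. y \<in> K \<Longrightarrow> n \<bullet> g t \<le> n \<bullet> y"
    using supporting_hyperplane_frontier[OF \<open>convex K\<close> gK[OF t]] by blast
  define h where "h u = n$1 * g u $ 1 + n$2 * g u $ 2" for u
  have h_min: "h t \<le> h u" if "u \<in> {0..1}" for u
    using n[OF gK[OF that]] by (simp add: h_def inner_real2)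
  have dh: "(h has_real_derivative n$1 * vx t + n$2 * vy t) (at t within {0..1})"
    unfolding h_def[abs_def] by (intro DERIV_add DERIV_cmult coords_has_derivative[OF t])
  have "0 \<le> n$1 * vx t + n$2 * vy t" "n$1 * vx t + n$2 * vy t \<le> 0"
    using min_right_deriv_nonneg[OF dh] min_left_deriv_nonpos[OF dh] assms h_min by auto
  then have "speed t * (n$1 * cos (tangent_angle t) + n$2 * sin (tangent_angle t)) = 0"
    by (simp add: vel_polar[OF t] algebra_simps)
  then have ortho: "n$1 * cos (tangent_angle t) + n$2 * sin (tangent_angle t) = 0"
    using speed_pos[OF t] by simp
  define \<mu> where "\<mu> = n$2 * cos (tangent_angle t) - n$1 * sin (tangent_angle t)"
  have supp: "0 \<le> \<mu> * normal_offset (tangent_angle t) (g t) (g u)" if "u \<in> {0..1}" for u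
    using n[OF gK[OF that]] inner_eq_normal_offset[OF ortho, of "g u" "g t"]
    by (simp add: \<mu>_def inner_diff_right)
  obtain u where u: "u \<in> {0..1}" and pos: "0 < normal_offset (tangent_angle t) (g t) (g u)"
    using normal_offset_pos_after assms(2) less_imp_le[OF assms(1)] by blast
  have "0 \<le> \<mu>" using supp[OF u] pos by (simp add: zero_le_mult_iff)
  moreover have "\<mu> \<noteq> 0"
    using normal_coefficient_nonzero[OF \<open>n \<noteq> 0\<close> ortho] by (simp add: \<mu>_def)
  ultimately show ?thesis using supp[OF assms(3)] by (simp add: zero_le_mult_iff)
qed

lemma left_of_tangent:
  assumes "t \<in> {0..1}" "s \<in> {0..1}"
  shows "0 \<le> normal_offset (tangent_angle t) (g t) (g s)"
proof -
  have "continuous_on (closure {0<..<1}) (\<lambda>t. normal_offset (tangent_angle t) (g t) (g s))"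
    unfolding normal_offset_def closure_greaterThanLessThan[OF zero_less_one]
    by (intro continuous_intros continuous_on_tangent_angle continuous_on_curve)
  moreover have "t \<in> closure {0<..<1::real}" using assms(1) by simp
  ultimately show ?thesis
    using continuous_ge_on_closure[of "{0<..<1::real}" _ t 0] left_of_tangent_interior[OF _ _ assms(2)]
    by auto
qed

text \<open>A full turn of the tangent brings it back to the tangent at the start; a convex arc can
  touch that line again only at its end, and then only behind the starting point.\<close>

lemma full_turn:
  assumes s: "s \<in> {0..1}" and turn: "tangent_angle s = tangent_angle 0 + 2 * pi"
  shows "s = 1" "tangent_offset (tangent_angle 0) (g 0) (g s) \<le> 0"
proof -
  have I0: "(0::real) \<in> {0..1}" by simp
  have "s \<noteq> 0" using turn pi_gt_zero by auto
  have "0 \<le> normal_offset (tangent_angle 0) (g 0) (g s)" "0 \<le> normal_offset (tangent_angle 0) (g s) (g 0)"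
    using left_of_tangent[OF I0 s] left_of_tangent[OF s I0] turn by simp_all
  then have on_line: "normal_offset (tangent_angle 0) (g 0) (g s) = 0"
    "normal_offset (tangent_angle s) (g s) (g 0) = 0"
    using offset_swap(2)[of "tangent_angle 0" "g s" "g 0"] turn by simp_all
  have "0 \<le> - turn_rate 0 * tangent_offset (tangent_angle 0) (g 0) (g s)"
    by (rule min_right_deriv_nonneg[OF normal_offset_from_tangent_has_derivative[OF I0]])
      (use on_line left_of_tangent[OF _ s] in auto)
  then show behind: "tangent_offset (tangent_angle 0) (g 0) (g s) \<le> 0"
    using turn_rate_pos[OF I0] by (simp add: mult_le_0_iff)
  show "s = 1"
  proof (rule ccontr)
    assume "s \<noteq> 1"
    with s have "0 \<le> - turn_rate s * tangent_offset (tangent_angle s) (g s) (g 0)"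
      by (intro min_right_deriv_nonneg[OF normal_offset_from_tangent_has_derivative[OF s]])
        (use on_line left_of_tangent[OF _ I0] in auto)
    moreover have "tangent_offset (tangent_angle s) (g s) (g 0) = - tangent_offset (tangent_angle 0) (g 0) (g s)"
      using offset_swap(1)[of "tangent_angle 0" "g s" "g 0"] turn by simp
    ultimately have "0 \<le> tangent_offset (tangent_angle 0) (g 0) (g s)"
      using turn_rate_pos[OF s] by (simp add: zero_le_mult_iff)
    with behind on_line have "g s = g 0" by (intro eq_if_offsets_eq_0) auto
    with curve_eqD[OF s I0] \<open>s \<noteq> 0\<close> show False by simp
  qed
qed

lemma total_turn_le_2pi: "tangent_angle 1 - tangent_angle 0 \<le> 2 * pi"
proof (rule ccontr)
  assume "\<not> ?thesis"
  then obtain s where "0 \<le> s" "s \<le> 1" "tangent_angle s = tangent_angle 0 + 2 * pi"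
    using IVT'[of tangent_angle 0 "tangent_angle 0 + 2 * pi" 1] continuous_on_tangent_angle pi_gt_zero
    by force
  with full_turn(1)[of s] \<open>\<not> ?thesis\<close> show False by auto
qed

lemma full_turn_end_behind:
  "tangent_angle 1 - tangent_angle 0 = 2 * pi \<Longrightarrow> tangent_offset (tangent_angle 0) (g 0) (g 1) \<le> 0"
  using full_turn(2)[of 1] by simp

lemma chord_direction:
  assumes "tangent_angle 1 - tangent_angle 0 \<le> pi"
  obtains \<psi> where "normal_offset \<psi> (g 0) (g 1) = 0" "0 < tangent_offset \<psi> (g 0) (g 1)"
    "tangent_angle 0 \<le> \<psi>" "\<psi> \<le> tangent_angle 1"
proof -
  have I0: "(0::real) \<in> {0..1}" and I1: "(1::real) \<in> {0..1}" by simp_all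
  have "g 0 \<noteq> g 1" using curve_eqD[OF I0 I1] by auto
  then obtain d \<psi> where "0 < d" and polar: "g 1 $ 1 - g 0 $ 1 = d * cos \<psi>" "g 1 $ 2 - g 0 $ 2 = d * sin \<psi>"
    by (rule polar_form)
  have "0 \<le> d * sin (\<psi> - tangent_angle 0)"
    using left_of_tangent[OF I0 I1] offsets_polar(2)[OF polar] by simp
  then have "0 \<le> sin (\<psi> - tangent_angle 0)" using \<open>0 < d\<close> by (simp add: zero_le_mult_iff)
  moreover have "0 \<le> - (d * sin (\<psi> - tangent_angle 1))"
    using left_of_tangent[OF I1 I0] offsets_polar(2)[OF polar] offset_swap(2)[of _ "g 1" "g 0"] by simp
  then have "sin (\<psi> - tangent_angle 1) \<le> 0" using \<open>0 < d\<close> by (simp add: mult_le_0_iff)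
  moreover have "0 < tangent_angle 1 - tangent_angle 0" using tangent_angle_less[OF I0 I1] by simp
  ultimately obtain n :: int where "tangent_angle 0 \<le> \<psi> + 2 * pi * n" "\<psi> + 2 * pi * n \<le> tangent_angle 1"
    using angle_mod_2pi_in_interval assms by blast
  moreover have "normal_offset (\<psi> + 2 * pi * n) (g 0) (g 1) = 0" "0 < tangent_offset (\<psi> + 2 * pi * n) (g 0) (g 1)"
    using offsets_polar[OF polar] \<open>0 < d\<close> by simp_all
  ultimately show ?thesis using that by blast
qed

lemma right_of_chord:
  assumes turn: "tangent_angle 1 - tangent_angle 0 \<le> pi"
    and \<psi>: "tangent_angle 0 \<le> \<psi>" "\<psi> \<le> tangent_angle 1" "normal_offset \<psi> (g 0) (g 1) = 0"
    and u: "u \<in> {0..1}"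
  shows "normal_offset \<psi> (g 0) (g u) \<le> 0"
proof (cases "tangent_angle u \<le> \<psi>")
  case True
  have "- normal_offset \<psi> (g 0) (g 0) \<le> - normal_offset \<psi> (g 0) (g u)"
  proof (rule has_real_derivative_nonneg_imp_le[of 0 u "{0..1}"])
    fix x assume x: "x \<in> {0..u}"
    then have xI: "x \<in> {0..1}" using u by auto
    show "((\<lambda>x. - normal_offset \<psi> (g 0) (g x)) has_real_derivative
        - (speed x * sin (tangent_angle x - \<psi>))) (at x within {0..1})"
      by (intro DERIV_minus normal_offset_has_derivative xI)
    have "tangent_angle 0 \<le> tangent_angle x" "tangent_angle x \<le> tangent_angle u"
      using tangent_angle_le[of 0 x] tangent_angle_le[OF xI u] x xI by auto
    then have "0 \<le> sin (\<psi> - tangent_angle x)"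
      using True turn \<psi> by (intro sin_ge_zero) auto
    then have "sin (tangent_angle x - \<psi>) \<le> 0"
      by (simp add: sin_diff_commute[of "tangent_angle x"])
    with speed_pos[OF xI] show "0 \<le> - (speed x * sin (tangent_angle x - \<psi>))"
      by (simp add: mult_le_0_iff)
  qed (use u in auto)
  then show ?thesis by simp
next
  case False
  have "normal_offset \<psi> (g 0) (g u) \<le> normal_offset \<psi> (g 0) (g 1)"
  proof (rule has_real_derivative_nonneg_imp_le[of u 1 "{0..1}"])
    fix x assume x: "x \<in> {u..1}"
    then have xI: "x \<in> {0..1}" using u by auto
    show "((\<lambda>x. normal_offset \<psi> (g 0) (g x)) has_real_derivative
        speed x * sin (tangent_angle x - \<psi>)) (at x within {0..1})"
      by (intro normal_offset_has_derivative xI)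
    have "tangent_angle u \<le> tangent_angle x" "tangent_angle x \<le> tangent_angle 1"
      using tangent_angle_le[OF u xI] tangent_angle_le[of x 1] x xI by auto
    then have "0 \<le> sin (tangent_angle x - \<psi>)"
      using False turn \<psi> by (intro sin_ge_zero) auto
    with speed_pos[OF xI] show "0 \<le> speed x * sin (tangent_angle x - \<psi>)" by simp
  qed (use u in auto)
  with \<psi>(3) show ?thesis by simp
qed

lemma chord_direction_strict:
  assumes turn: "tangent_angle 1 - tangent_angle 0 \<le> pi"
    and \<psi>: "tangent_angle 0 \<le> \<psi>" "\<psi> \<le> tangent_angle 1" "normal_offset \<psi> (g 0) (g 1) = 0"
  shows "tangent_angle 0 < \<psi>" "\<psi> < tangent_angle 1"
proof -
  have I0: "(0::real) \<in> {0..1}" and I1: "(1::real) \<in> {0..1}" and Ih: "1 / 2 \<in> {0..1::real}" by simp_all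
  have mid: "tangent_angle 0 < tangent_angle (1 / 2)" "tangent_angle (1 / 2) < tangent_angle 1"
    using tangent_angle_less[OF I0 Ih] tangent_angle_less[OF Ih I1] by simp_all
  show "tangent_angle 0 < \<psi>"
  proof (rule ccontr)
    assume "\<not> tangent_angle 0 < \<psi>"
    with \<psi> have \<psi>0: "\<psi> = tangent_angle 0" by simp
    have "normal_offset \<psi> (g 0) (g u) = 0" if "u \<in> {0..1}" for u
      using right_of_chord[OF turn \<psi> that] left_of_tangent[OF I0 that] \<psi>0 by simp
    then have "sin (tangent_angle (1 / 2) - \<psi>) = 0" by (rule sin_angle_eq_0_if_on_line) simp_all
    moreover have "0 < sin (tangent_angle (1 / 2) - \<psi>)"
      using mid turn \<psi>0 by (intro sin_gt_zero) auto
    ultimately show False by simp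
  qed
  show "\<psi> < tangent_angle 1"
  proof (rule ccontr)
    assume "\<not> \<psi> < tangent_angle 1"
    with \<psi> have \<psi>1: "\<psi> = tangent_angle 1" by simp
    have "normal_offset \<psi> (g 0) (g u) = 0" if "u \<in> {0..1}" for u
      using right_of_chord[OF turn \<psi> that] left_of_tangent[OF I1 that] \<psi>1 \<psi>(3)
        normal_offset_change_base[where a=\<psi> and P="g 0" and Q="g 1" and X="g u"] by simp
    then have "sin (tangent_angle (1 / 2) - \<psi>) = 0" by (rule sin_angle_eq_0_if_on_line) simp_all
    moreover have "0 < sin (\<psi> - tangent_angle (1 / 2))"
      using mid turn \<psi>1 by (intro sin_gt_zero) auto
    ultimately show False by (simp add: sin_diff_commute[of "tangent_angle (1 / 2)"])
  qed
qed

lemma hull_subset_tangent_triangle: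
  assumes "tangent_angle 1 - tangent_angle 0 \<le> pi"
    and "tangent_angle 0 \<le> \<psi>" "\<psi> \<le> tangent_angle 1" "normal_offset \<psi> (g 0) (g 1) = 0"
  shows "convex hull (path_image g) \<subseteq> tangent_triangle (tangent_angle 0) (tangent_angle 1) \<psi> (g 0) (g 1)"
proof (rule hull_minimal)
  show "path_image g \<subseteq> tangent_triangle (tangent_angle 0) (tangent_angle 1) \<psi> (g 0) (g 1)"
    using left_of_tangent[of 0] left_of_tangent[of 1] right_of_chord[OF assms]
    by (auto simp: path_image_def tangent_triangle_def)
qed (rule convex_tangent_triangle)

lemma chord_projection_ge_half_angle:
  assumes "0 < M" "\<And>t. t \<in> {0..1} \<Longrightarrow> curvature g t \<le> M"
    and turn: "tangent_angle 1 - tangent_angle 0 \<le> pi"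
  shows "2 * sin ((tangent_angle 1 - tangent_angle 0) / 2) / M
    \<le> tangent_offset ((tangent_angle 0 + tangent_angle 1) / 2) (g 0) (g 1)"
proof -
  define b where "b = (tangent_angle 0 + tangent_angle 1) / 2"
  have cos_nonneg: "0 \<le> cos (tangent_angle u - b)" if "u \<in> {0..1}" for u
    using tangent_angle_le[of 0 u] tangent_angle_le[of u 1] that turn
    by (intro cos_ge_zero) (auto simp: b_def field_simps)
  have "(sin (tangent_angle 1 - b) - sin (tangent_angle 0 - b)) / M \<le> tangent_offset b (g 0) (g 1)"
    by (rule chord_projection_ge[OF assms(1,2) cos_nonneg])
  moreover have "tangent_angle 1 - b = (tangent_angle 1 - tangent_angle 0) / 2"
    "tangent_angle 0 - b = - ((tangent_angle 1 - tangent_angle 0) / 2)"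
    by (simp_all add: b_def field_simps)
  then have "sin (tangent_angle 1 - b) - sin (tangent_angle 0 - b) = 2 * sin ((tangent_angle 1 - tangent_angle 0) / 2)"
    by (simp only:) simp
  ultimately show ?thesis unfolding b_def[symmetric] by simp
qed

end

section \<open>A convex arc inside the tangent triangle of another\<close>

text \<open>The conditions \<open>chord\<close> say that \<open>B - A\<close> is a positive multiple of \<open>(cos \<psi>, sin \<psi>)\<close>.\<close>

locale arc_in_triangle = convex_arc +
  fixes a0 a1 \<psi> :: real and A B :: "real^2"
  assumes in_triangle: "path_image g \<subseteq> tangent_triangle a0 a1 \<psi> A B"
    and angles: "a0 < \<psi>" "\<psi> < a1" "a1 - a0 \<le> pi"
    and chord: "normal_offset \<psi> A B = 0" "0 < tangent_offset \<psi> A B"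
begin

lemma triangle_offsets:
  assumes "u \<in> {0..1}"
  shows "0 \<le> normal_offset a0 A (g u)" "0 \<le> normal_offset a1 B (g u)" "normal_offset \<psi> A (g u) \<le> 0"
proof -
  have "g u \<in> tangent_triangle a0 a1 \<psi> A B"
    using in_triangle assms by (auto simp: path_image_def)
  then show "0 \<le> normal_offset a0 A (g u)" "0 \<le> normal_offset a1 B (g u)" "normal_offset \<psi> A (g u) \<le> 0"
    by (simp_all add: tangent_triangle_def)
qed

lemma chord_offsets:
  "normal_offset b A B = tangent_offset \<psi> A B * sin (\<psi> - b)"
  "tangent_offset b A B = tangent_offset \<psi> A B * cos (\<psi> - b)"
  using offsets_rotate[where a=\<psi> and b=b and P=A and Q=B] chord(1) by simp_all

lemma tangent_angles_in_range:
  assumes ends: "g 0 = A" "g 1 = B"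
  obtains n :: int
  where "\<And>u. u \<in> {0..1} \<Longrightarrow> a0 \<le> tangent_angle u + 2 * pi * n \<and> tangent_angle u + 2 * pi * n \<le> a1"
proof -
  have I0: "(0::real) \<in> {0..1}" and I1: "(1::real) \<in> {0..1}" by simp_all
  have gaps: "0 < \<psi> - a0" "\<psi> - a0 \<le> pi" "0 < a1 - \<psi>" "a1 - \<psi> \<le> pi"
    using angles by simp_all
  have "0 \<le> sin (tangent_angle 0 - a0)"
    by (rule sin_start_angle_nonneg[where P=A]) (use triangle_offsets ends in simp)
  moreover have "sin (tangent_angle 0 - \<psi>) \<le> 0"
    by (rule sin_start_angle_nonpos[where P=A]) (use triangle_offsets ends in simp)
  ultimately obtain n0 :: int
    where n0: "a0 \<le> tangent_angle 0 + 2 * pi * n0" "tangent_angle 0 + 2 * pi * n0 \<le> \<psi>"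
    by (rule angle_mod_2pi_in_interval[OF gaps(1,2)])
  have "0 \<le> sin (tangent_angle 1 - \<psi>)"
    by (rule sin_finish_angle_nonneg[where P=A]) (use triangle_offsets ends chord in simp)
  moreover have "sin (tangent_angle 1 - a1) \<le> 0"
    by (rule sin_finish_angle_nonpos[where P=B]) (use triangle_offsets ends in simp)
  ultimately obtain n1 :: int
    where n1: "\<psi> \<le> tangent_angle 1 + 2 * pi * n1" "tangent_angle 1 + 2 * pi * n1 \<le> a1"
    by (rule angle_mod_2pi_in_interval[OF gaps(3,4)])
  have turn: "0 < tangent_angle 1 - tangent_angle 0" "tangent_angle 1 - tangent_angle 0 \<le> 2 * pi"
    using tangent_angle_less[OF I0 I1] total_turn_le_2pi by simp_all
  have "n1 = n0"
  proof (rule ccontr)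
    assume "n1 \<noteq> n0"
    then consider "1 \<le> n0 - n1" | "1 \<le> n1 - n0" by linarith
    then show False
    proof cases
      case 1
      then have "2 * pi * 1 \<le> 2 * pi * of_int (n0 - n1)" by (intro mult_left_mono) simp_all
      then have "2 * pi \<le> 2 * pi * n0 - 2 * pi * n1" by (simp add: right_diff_distrib)
      with n0 n1 turn have "tangent_angle 1 - tangent_angle 0 = 2 * pi" "\<psi> - tangent_angle 0 = 2 * pi * n0"
        by linarith+
      then have "tangent_offset (tangent_angle 0) A B \<le> 0" "tangent_offset (tangent_angle 0) A B = tangent_offset \<psi> A B"
        using full_turn_end_behind ends chord_offsets(2)[of "tangent_angle 0"] by simp_all
      with chord(2) show False by simp
    next
      case 2
      then have "2 * pi * 1 \<le> 2 * pi * of_int (n1 - n0)" by (intro mult_left_mono) simp_all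
      then have "2 * pi \<le> 2 * pi * n1 - 2 * pi * n0" by (simp add: right_diff_distrib)
      with n0 n1 turn angles show False by linarith
    qed
  qed
  have "a0 \<le> tangent_angle u + 2 * pi * n0 \<and> tangent_angle u + 2 * pi * n0 \<le> a1" if "u \<in> {0..1}" for u
    using tangent_angle_le[OF I0 that] tangent_angle_le[OF that I1] that n0 n1 \<open>n1 = n0\<close> by auto
  then show ?thesis by (rule that)
qed

text \<open>An arc from \<open>B\<close> to \<open>A\<close> inside the triangle would have to leave \<open>B\<close> and arrive
  at \<open>A\<close> along the chord, i.e. in direction \<open>\<psi> + pi\<close>: a full turn ending behind its start.\<close>

lemma reversed_start_angle:
  assumes ends: "g 0 = B" "g 1 = A"
  shows "cos (tangent_angle 0 - \<psi>) = -1"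
proof -
  have I0: "(0::real) \<in> {0..1}" and I1: "(1::real) \<in> {0..1}" by simp_all
  have "sin (tangent_angle 0 - \<psi>) \<le> 0"
    by (rule sin_start_angle_nonpos[where P=A]) (use triangle_offsets ends chord in simp)
  moreover have "0 \<le> - (tangent_offset \<psi> A B * sin (\<psi> - tangent_angle 0))"
    using left_of_tangent[OF I0 I1] ends chord_offsets(1)[of "tangent_angle 0"] offset_swap(2)[of _ B A] by simp
  then have "0 \<le> sin (tangent_angle 0 - \<psi>)"
    using chord(2) by (simp add: sin_diff_commute[of \<psi>] zero_le_mult_iff)
  ultimately have sin0: "sin (tangent_angle 0 - \<psi>) = 0" by simp
  have "0 \<le> sin (tangent_angle 0 - a1)"
    by (rule sin_start_angle_nonneg[where P=B]) (use triangle_offsets ends in simp)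
  also have "sin (tangent_angle 0 - a1) = - cos (tangent_angle 0 - \<psi>) * sin (a1 - \<psi>)"
    using sin_diff[of "tangent_angle 0 - \<psi>" "a1 - \<psi>"] sin0 by simp
  finally have "cos (tangent_angle 0 - \<psi>) \<le> 0"
    using sin_gt_zero[of "a1 - \<psi>"] angles by (simp add: mult_le_0_iff)
  with sin0 show ?thesis by (rule cos_eq_minus_1_if_sin_eq_0)
qed

lemma reversed_finish_angle:
  assumes ends: "g 0 = B" "g 1 = A"
  shows "cos (tangent_angle 1 - \<psi>) = -1"
proof -
  have I0: "(0::real) \<in> {0..1}" and I1: "(1::real) \<in> {0..1}" by simp_all
  have "0 \<le> sin (tangent_angle 1 - \<psi>)"
    by (rule sin_finish_angle_nonneg[where P=A]) (use triangle_offsets ends in simp)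
  moreover have "0 \<le> tangent_offset \<psi> A B * sin (\<psi> - tangent_angle 1)"
    using left_of_tangent[OF I1 I0] ends chord_offsets(1)[of "tangent_angle 1"] by simp
  then have "sin (tangent_angle 1 - \<psi>) \<le> 0"
    using chord(2) by (simp add: sin_diff_commute[of \<psi>] mult_le_0_iff)
  ultimately have sin1: "sin (tangent_angle 1 - \<psi>) = 0" by simp
  have "sin (tangent_angle 1 - a0) \<le> 0"
    by (rule sin_finish_angle_nonpos[where P=A]) (use triangle_offsets ends in simp)
  also have "sin (tangent_angle 1 - a0) = cos (tangent_angle 1 - \<psi>) * sin (\<psi> - a0)"
    using sin_add[of "tangent_angle 1 - \<psi>" "\<psi> - a0"] sin1 by simp
  finally have "cos (tangent_angle 1 - \<psi>) \<le> 0"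
    using sin_gt_zero[of "\<psi> - a0"] angles by (simp add: mult_le_0_iff)
  with sin1 show ?thesis by (rule cos_eq_minus_1_if_sin_eq_0)
qed

lemma not_reversed:
  assumes ends: "g 0 = B" "g 1 = A"
  shows False
proof -
  have I0: "(0::real) \<in> {0..1}" and I1: "(1::real) \<in> {0..1}" by simp_all
  have "cos (tangent_angle 1 - tangent_angle 0) = 1"
    using cos_diff[of "tangent_angle 1 - \<psi>" "tangent_angle 0 - \<psi>"] sin_cos_squared_add[of "tangent_angle 0 - \<psi>"]
      sin_cos_squared_add[of "tangent_angle 1 - \<psi>"] reversed_start_angle[OF ends] reversed_finish_angle[OF ends]
    by (simp add: power2_eq_square)
  then obtain k :: int where k: "tangent_angle 1 - tangent_angle 0 = of_int k * 2 * pi"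
    unfolding cos_one_2pi_int by blast
  moreover have "0 < tangent_angle 1 - tangent_angle 0" "tangent_angle 1 - tangent_angle 0 \<le> 2 * pi"
    using tangent_angle_less[OF I0 I1] total_turn_le_2pi by simp_all
  ultimately have "k = 1" by (simp add: zero_less_mult_iff mult_le_cancel_right1)
  with k have "tangent_offset (tangent_angle 0) B A \<le> 0"
    using full_turn_end_behind ends by simp
  moreover have "tangent_offset (tangent_angle 0) B A = tangent_offset \<psi> A B"
    using offset_swap(1)[of _ B A] chord_offsets(2)[of "tangent_angle 0"] reversed_start_angle[OF ends]
    by (simp add: cos_minus[of "\<psi> - tangent_angle 0", simplified])
  ultimately show False using chord(2) by simp
qed

lemma endpoints_in_order:
  assumes "{g 0, g 1} = {A, B}"
  shows "g 0 = A" "g 1 = B"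
  using assms not_reversed by (auto simp: doubleton_eq_iff)

lemma chord_projection_le_min_curvature:
  assumes "{g 0, g 1} = {A, B}" "0 < m" "\<And>t. t \<in> {0..1} \<Longrightarrow> m \<le> curvature g t"
  shows "tangent_offset ((a0 + a1) / 2) A B \<le> 2 * sin ((a1 - a0) / 2) / m"
proof -
  have ends: "g 0 = A" "g 1 = B" using endpoints_in_order[OF assms(1)] by simp_all
  obtain n :: int
    where "\<And>u. u \<in> {0..1} \<Longrightarrow> a0 \<le> tangent_angle u + 2 * pi * n \<and> tangent_angle u + 2 * pi * n \<le> a1"
    using tangent_angles_in_range[OF ends] by blast
  from chord_projection_le_half_angle[OF assms(2,3) angles(3) this] ends show ?thesis by simp
qed

end

lemma (in convex_arc) arc_in_tangent_triangle:
  assumes "convex_arc h" "path_image h \<subseteq> convex hull (path_image g)"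
    and turn: "tangent_angle 1 - tangent_angle 0 \<le> pi"
  obtains \<psi> where "arc_in_triangle h (tangent_angle 0) (tangent_angle 1) \<psi> (g 0) (g 1)"
proof -
  obtain \<psi> where \<psi>: "normal_offset \<psi> (g 0) (g 1) = 0" "0 < tangent_offset \<psi> (g 0) (g 1)"
    "tangent_angle 0 \<le> \<psi>" "\<psi> \<le> tangent_angle 1"
    using chord_direction[OF turn] by blast
  have "arc_in_triangle h (tangent_angle 0) (tangent_angle 1) \<psi> (g 0) (g 1)"
  proof (intro arc_in_triangle.intro arc_in_triangle_axioms.intro)
    show "path_image h \<subseteq> tangent_triangle (tangent_angle 0) (tangent_angle 1) \<psi> (g 0) (g 1)"
      using assms(2) hull_subset_tangent_triangle[OF turn \<psi>(3,4,1)] by blast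
    show "tangent_angle 0 < \<psi>" "\<psi> < tangent_angle 1"
      using chord_direction_strict[OF turn \<psi>(3,4,1)] by simp_all
  qed (use assms(1) turn \<psi> in simp_all)
  then show ?thesis by (rule that)
qed

theorem lemma4p5:
  fixes \<gamma>1 \<gamma>2 :: "real \<Rightarrow> real^2"
  assumes "convex_curve \<gamma>1" and "convex_curve \<gamma>2"
    and "{pathstart \<gamma>1, pathfinish \<gamma>1} = {pathstart \<gamma>2, pathfinish \<gamma>2}"
    and "path_image \<gamma>1 \<subseteq> convex hull (path_image \<gamma>2)"
    and "total_curvature \<gamma>2 \<le> pi"
  shows "(SUP t\<in>{0..1}. curvature \<gamma>2 t) \<ge> (INF s\<in>{0..1}. curvature \<gamma>1 s)"
proof -
  interpret C2: convex_arc \<gamma>2 by (rule convex_arc.intro) (rule assms(2))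
  define a0 a1 where "a0 = C2.tangent_angle 0" and "a1 = C2.tangent_angle 1"
  have turn: "a1 - a0 \<le> pi"
    using C2.total_turn_eq_total_curvature assms(5) by (simp add: a0_def a1_def)
  obtain \<psi> where "arc_in_triangle \<gamma>1 a0 a1 \<psi> (\<gamma>2 0) (\<gamma>2 1)"
    using C2.arc_in_tangent_triangle[OF _ assms(4)] assms(1) turn convex_arc.intro
    unfolding a0_def a1_def by blast
  then interpret C1: arc_in_triangle \<gamma>1 a0 a1 \<psi> "\<gamma>2 0" "\<gamma>2 1" .
  define M m where "M = (SUP t\<in>{0..1}. curvature \<gamma>2 t)" and "m = (INF s\<in>{0..1}. curvature \<gamma>1 s)"
  have "0 < M" using C2.curvature_pos[of 0] C2.curvature_le_SUP[of 0] by (simp add: M_def)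
  show ?thesis
  proof (rule ccontr)
    assume "\<not> ?thesis"
    then have "M < m" by (simp add: M_def m_def)
    have "2 * sin ((a1 - a0) / 2) / M \<le> tangent_offset ((a0 + a1) / 2) (\<gamma>2 0) (\<gamma>2 1)"
      using C2.chord_projection_ge_half_angle[OF \<open>0 < M\<close> C2.curvature_le_SUP[folded M_def]] turn
      unfolding a0_def a1_def by blast
    also have "\<dots> \<le> 2 * sin ((a1 - a0) / 2) / m"
      using C1.chord_projection_le_min_curvature C1.INF_le_curvature assms(3) \<open>0 < M\<close> \<open>M < m\<close>
      by (simp add: m_def pathstart_def pathfinish_def)
    also have "\<dots> < 2 * sin ((a1 - a0) / 2) / M"
      using sin_gt_zero[of "(a1 - a0) / 2"] C1.angles \<open>0 < M\<close> \<open>M < m\<close>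
      by (intro divide_strict_left_mono) simp_all
    finally show False by simp
  qed
qed

end
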